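(* For every positive integer $n$, the splitting graph $\mathrm{Spltg}(K_{1,n})$ of the star $K_{1,n}$ admits a signed product cordial labeling.
   Context: A graph $G$ is signed product cordial if there is a vertex labeling $\alpha: V(G)\to\{1,-1\}$ such that, with the induced edge labeling $\alpha^*(uv)=\alpha(u)\alpha(v)$, we have $|v_\alpha(-1)-v_\alpha(1)|\le 1$ and $|e_{\alpha^*}(-1)-e_{\alpha^*}(1)|\le 1$. Here $v_\alpha(x)$ is the number of vertices labeled $x$ and $e_{\alpha^*}(x)$ is the number of edges labeled $x$; such an $\alpha$ is called a signed product cordial labeling. The splitting graph $\mathrm{Spltg}(G)$ of a graph $G$ is obtained from $G$ by adding, for each vertex $v$ of $G$, a new vertex $v'$ made adjacent to exactly the neighbors of $v$ in $G$. The star $K_{1,n}$ has an apex vertex $v_0$ adjacent to $n$ pendant vertices $v_1,\dots,v_n$. *)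

theory Defs
  imports Main
begin

text \<open>A finite simple graph is represented as a pair (V, E) of a vertex set and a set of
edges, each edge being a two-element subset of V.\<close>

type_synonym 'a graph = "'a set \<times> 'a set set"

definition verts :: "'a graph \<Rightarrow> 'a set" where "verts G = fst G"
definition edges :: "'a graph \<Rightarrow> 'a set set" where "edges G = snd G"

definition star :: "nat \<Rightarrow> nat graph" where
  "star n = ({0..n}, {{0, i} | i. 1 \<le> i \<and> i \<le> n})"

text \<open>Splitting graph: original vertex v is (v, False); the new vertex v' is (v, True),
adjacent to exactly the neighbours of v in G.\<close>
definition spltg :: "'a graph \<Rightarrow> ('a \<times> bool) graph" where
  "spltg G = ((\<lambda>v. (v, False)) ` verts G \<union> (\<lambda>v. (v, True)) ` verts G,
     {{(u, False), (w, False)} | u w. {u, w} \<in> edges G} \<union>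
     {{(v, True), (w, False)} | v w. {v, w} \<in> edges G})"

definition edge_label :: "('a \<Rightarrow> int) \<Rightarrow> 'a set \<Rightarrow> int" where
  "edge_label \<alpha> e = (THE x. \<exists>u v. e = {u, v} \<and> u \<noteq> v \<and> x = \<alpha> u * \<alpha> v)"

definition signed_product_cordial_labeling :: "'a graph \<Rightarrow> ('a \<Rightarrow> int) \<Rightarrow> bool" where
  "signed_product_cordial_labeling G \<alpha> \<longleftrightarrow>
     (\<forall>v \<in> verts G. \<alpha> v \<in> {1, -1}) \<and>
     \<bar>int (card {v \<in> verts G. \<alpha> v = -1}) - int (card {v \<in> verts G. \<alpha> v = 1})\<bar> \<le> 1 \<and>
     \<bar>int (card {e \<in> edges G. edge_label \<alpha> e = -1}) - int (card {e \<in> edges G. edge_label \<alpha> e = 1})\<bar> \<le> 1"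

definition signed_product_cordial :: "'a graph \<Rightarrow> bool" where
  "signed_product_cordial G \<longleftrightarrow> (\<exists>\<alpha>. signed_product_cordial_labeling G \<alpha>)"

end

theory Submission
  imports Defs
begin

(* Give each new vertex v' of Spltg(G) the opposite of the label of v. Then the vertex labels
   cancel in pairs, and every edge uw of G gives rise to the edges uw, u'w and w'u, labelled
   s, -s and -s, so the edge-label sum of Spltg(G) is minus that of G. As the number of -1 labels
   minus the number of 1 labels is minus the label sum, Spltg(G) is signed product cordial as soon
   as G has a +-1 labelling whose edge-label sum lies in {-1, 0, 1}. For K_{1,n} it suffices to
   label the apex 1 and the leaves alternately -1, 1, -1, ... *)

definition finite_simple_graph :: "'a graph \<Rightarrow> bool" where
  "finite_simple_graph G \<longleftrightarrow> finite (verts G) \<and> finite (edges G) \<and>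
     (\<forall>e \<in> edges G. card e = 2 \<and> e \<subseteq> verts G)"

lemma finite_simple_graph_finite:
  assumes "finite_simple_graph G"
  shows "finite (verts G)" and "finite (edges G)"
  using assms unfolding finite_simple_graph_def by blast+

lemma finite_simple_graph_edgeE:
  assumes "finite_simple_graph G" and "e \<in> edges G"
  obtains u v where "u \<noteq> v" "e = {u, v}"
proof -
  have "card e = 2"
    using assms unfolding finite_simple_graph_def by blast
  with that show ?thesis
    by (auto simp: card_2_iff)
qed

lemma finite_simple_graph_edge_neq:
  assumes "finite_simple_graph G" and "{u, v} \<in> edges G"
  shows "u \<noteq> v"
proof
  assume "u = v"
  moreover have "card {u, v} = 2"
    using assms unfolding finite_simple_graph_def by blast
  ultimately show False
    by simp
qed

lemma finite_simple_graph_edge_subset: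
  assumes "finite_simple_graph G" and "e \<in> edges G"
  shows "e \<subseteq> verts G"
  using assms unfolding finite_simple_graph_def by blast

lemma card_neg_minus_card_pos:
  fixes f :: "'a \<Rightarrow> int"
  assumes "finite S" and "\<forall>x \<in> S. f x \<in> {1, -1}"
  shows "int (card {x \<in> S. f x = -1}) - int (card {x \<in> S. f x = 1}) = - sum f S"
proof -
  define P N where "P = {x \<in> S. f x = 1}" and "N = {x \<in> S. f x = -1}"
  have "S = P \<union> N" "P \<inter> N = {}"
    using assms(2) by (auto simp: P_def N_def)
  moreover have "finite P" "finite N"
    using assms(1) by (simp_all add: P_def N_def)
  ultimately have "sum f S = sum f P + sum f N"
    by (simp add: sum.union_disjoint)
  moreover have "sum f P = int (card P)" "sum f N = - int (card N)"
    by (simp_all add: P_def N_def)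
  ultimately show ?thesis
    by (simp add: P_def N_def)
qed

lemma edge_label_doubleton:
  assumes "u \<noteq> v"
  shows "edge_label \<alpha> {u, v} = \<alpha> u * \<alpha> v"
  unfolding edge_label_def
  by (rule the_equality) (use assms in \<open>auto simp: doubleton_eq_iff\<close>)

lemma signed_product_cordial_labeling_iff_sums:
  assumes G: "finite_simple_graph G" and pm: "\<forall>v. \<alpha> v \<in> {1, -1}"
  shows "signed_product_cordial_labeling G \<alpha> \<longleftrightarrow>
    \<bar>sum \<alpha> (verts G)\<bar> \<le> 1 \<and> \<bar>\<Sum>e \<in> edges G. edge_label \<alpha> e\<bar> \<le> 1"
proof -
  have "edge_label \<alpha> e \<in> {1, -1}" if e: "e \<in> edges G" for e
  proof -
    obtain u v where "u \<noteq> v" "e = {u, v}"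
      by (rule finite_simple_graph_edgeE[OF G e])
    with pm[rule_format, of u] pm[rule_format, of v] show ?thesis
      by (auto simp: edge_label_doubleton)
  qed
  then show ?thesis
    using G pm card_neg_minus_card_pos[of "verts G" \<alpha>]
      card_neg_minus_card_pos[of "edges G" "edge_label \<alpha>"]
    by (simp add: signed_product_cordial_labeling_def finite_simple_graph_finite)
qed

lemma verts_spltg:
  "verts (spltg G) = (\<lambda>v. (v, False)) ` verts G \<union> (\<lambda>v. (v, True)) ` verts G"
  by (simp add: spltg_def verts_def)

definition darts :: "'a graph \<Rightarrow> ('a \<times> 'a) set" where
  "darts G = {(v, w). {v, w} \<in> edges G}"

lemma edges_spltg:
  assumes G: "finite_simple_graph G"
  shows "edges (spltg G) =
    (\<lambda>e. (\<lambda>v. (v, False)) ` e) ` edges G \<union>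
    (\<lambda>(v, w). {(v, True), (w, False)}) ` darts G"
proof -
  have "{{(u, False), (w, False)} | u w. {u, w} \<in> edges G} = (\<lambda>e. (\<lambda>v. (v, False)) ` e) ` edges G"
  proof (intro equalityI subsetI)
    fix e assume "e \<in> {{(u, False), (w, False)} | u w. {u, w} \<in> edges G}"
    then obtain u w where "{u, w} \<in> edges G" "e = (\<lambda>v. (v, False)) ` {u, w}"
      by auto
    then show "e \<in> (\<lambda>e. (\<lambda>v. (v, False)) ` e) ` edges G"
      by (rule rev_image_eqI)
  next
    fix e assume "e \<in> (\<lambda>e. (\<lambda>v. (v, False)) ` e) ` edges G"
    then obtain e' where e': "e' \<in> edges G" "e = (\<lambda>v. (v, False)) ` e'"
      by blast
    moreover obtain u w where "e' = {u, w}"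
      using finite_simple_graph_edgeE[OF G e'(1)] by blast
    ultimately show "e \<in> {{(u, False), (w, False)} | u w. {u, w} \<in> edges G}"
      by auto
  qed
  moreover have "{{(v, True), (w, False)} | v w. {v, w} \<in> edges G} =
      (\<lambda>(v, w). {(v, True), (w, False)}) ` darts G"
    by (auto simp: darts_def)
  ultimately show ?thesis
    by (simp add: spltg_def edges_def)
qed

lemma finite_darts:
  assumes G: "finite_simple_graph G"
  shows "finite (darts G)"
proof (rule finite_subset)
  show "darts G \<subseteq> verts G \<times> verts G"
    using finite_simple_graph_edge_subset[OF G] by (auto simp: darts_def)
  show "finite (verts G \<times> verts G)"
    using finite_simple_graph_finite[OF G] by simp
qed

lemma finite_simple_graph_spltg:
  assumes G: "finite_simple_graph G"
  shows "finite_simple_graph (spltg G)"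
proof -
  have "card e = 2 \<and> e \<subseteq> verts (spltg G)" if "e \<in> edges (spltg G)" for e
  proof -
    from that consider (old) u w where "{u, w} \<in> edges G" "e = {(u, False), (w, False)}"
      | (new) v w where "{v, w} \<in> edges G" "e = {(v, True), (w, False)}"
      unfolding spltg_def edges_def by auto
    then show ?thesis
    proof cases
      case old
      then have "u \<noteq> w" "{u, w} \<subseteq> verts G"
        using finite_simple_graph_edge_neq[OF G] finite_simple_graph_edge_subset[OF G] by blast+
      with old show ?thesis
        by (auto simp: verts_spltg)
    next
      case new
      then have "{v, w} \<subseteq> verts G"
        using finite_simple_graph_edge_subset[OF G] by blast
      with new show ?thesis
        by (auto simp: verts_spltg)
    qed
  qed
  moreover have "finite (verts (spltg G))" "finite (edges (spltg G))"
    using finite_simple_graph_finite[OF G] finite_darts[OF G]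
    by (simp_all add: verts_spltg edges_spltg[OF G])
  ultimately show ?thesis
    unfolding finite_simple_graph_def by blast
qed

definition spltg_labeling :: "('a \<Rightarrow> int) \<Rightarrow> 'a \<times> bool \<Rightarrow> int" where
  "spltg_labeling \<beta> = (\<lambda>(v, new). if new then - \<beta> v else \<beta> v)"

lemma sum_verts_spltg_labeling:
  assumes "finite (verts G)"
  shows "sum (spltg_labeling \<beta>) (verts (spltg G)) = 0"
proof -
  have "sum (spltg_labeling \<beta>) (verts (spltg G)) =
      sum (spltg_labeling \<beta>) ((\<lambda>v. (v, False)) ` verts G) +
      sum (spltg_labeling \<beta>) ((\<lambda>v. (v, True)) ` verts G)"
    using assms unfolding verts_spltg by (intro sum.union_disjoint) auto
  also have "\<dots> = sum \<beta> (verts G) - sum \<beta> (verts G)"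
    by (simp add: sum.reindex inj_on_def spltg_labeling_def sum_negf)
  finally show ?thesis
    by simp
qed

lemma sum_darts_eq_twice_sum_edges:
  assumes G: "finite_simple_graph G"
  shows "(\<Sum>(v, w) \<in> darts G. \<beta> v * \<beta> w) =
    2 * (\<Sum>e \<in> edges G. edge_label \<beta> e)"
proof -
  have "(\<Sum>(v, w) \<in> darts G. \<beta> v * \<beta> w) =
      (\<Sum>e \<in> edges G. \<Sum>(v, w) \<in> {(v, w) \<in> darts G. {v, w} = e}. \<beta> v * \<beta> w)"
  proof -
    have "(\<lambda>(v, w). {v, w}) ` darts G \<subseteq> edges G"
      by (auto simp: darts_def)
    from sum.group[OF finite_darts[OF G] finite_simple_graph_finite(2)[OF G] this,
        where h = "\<lambda>(v, w). \<beta> v * \<beta> w"]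
    show ?thesis
      by (simp add: split_def)
  qed
  also have "\<dots> = (\<Sum>e \<in> edges G. 2 * edge_label \<beta> e)"
  proof (rule sum.cong[OF refl])
    fix e assume e: "e \<in> edges G"
    then obtain u v where uv: "u \<noteq> v" "e = {u, v}"
      by (rule finite_simple_graph_edgeE[OF G])
    with e have "{(v', w). (v', w) \<in> darts G \<and> {v', w} = e} = {(u, v), (v, u)}"
      by (auto simp: darts_def doubleton_eq_iff insert_commute)
    with uv show "(\<Sum>(v, w) \<in> {(v, w) \<in> darts G. {v, w} = e}. \<beta> v * \<beta> w) = 2 * edge_label \<beta> e"
      by (simp add: edge_label_doubleton)
  qed
  finally show ?thesis
    by (simp add: sum_distrib_left)
qed

lemma sum_edges_spltg_labeling:
  assumes G: "finite_simple_graph G"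
  shows "(\<Sum>e \<in> edges (spltg G). edge_label (spltg_labeling \<beta>) e) =
    - (\<Sum>e \<in> edges G. edge_label \<beta> e)"
proof -
  let ?\<alpha> = "spltg_labeling \<beta>"
  let ?old = "\<lambda>e. (\<lambda>v. (v, False)) ` e" and ?new = "\<lambda>(v, w). {(v, True), (w, False)}"
  have old: "(\<Sum>e \<in> ?old ` edges G. edge_label ?\<alpha> e) = (\<Sum>e \<in> edges G. edge_label \<beta> e)"
  proof -
    have "inj_on ?old (edges G)"
      by (rule inj_onI) auto
    moreover have "edge_label ?\<alpha> (?old e) = edge_label \<beta> e" if e: "e \<in> edges G" for e
    proof -
      obtain u v where "u \<noteq> v" "e = {u, v}"
        by (rule finite_simple_graph_edgeE[OF G e])
      then show ?thesis
        by (simp add: edge_label_doubleton spltg_labeling_def)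
    qed
    ultimately show ?thesis
      by (simp add: sum.reindex)
  qed
  have new: "(\<Sum>e \<in> ?new ` darts G. edge_label ?\<alpha> e) = - 2 * (\<Sum>e \<in> edges G. edge_label \<beta> e)"
  proof -
    have "inj_on ?new (darts G)"
      by (rule inj_onI) (auto simp: doubleton_eq_iff)
    then have "(\<Sum>e \<in> ?new ` darts G. edge_label ?\<alpha> e) = (\<Sum>(v, w) \<in> darts G. - (\<beta> v * \<beta> w))"
      by (simp add: sum.reindex case_prod_unfold edge_label_doubleton spltg_labeling_def)
    then show ?thesis
      using sum_darts_eq_twice_sum_edges[OF G, of \<beta>] by (simp add: sum_negf case_prod_unfold)
  qed
  have "?old ` edges G \<inter> ?new ` darts G = {}"
    by auto
  then show ?thesis
    using finite_simple_graph_finite[OF G] finite_darts[OF G] old new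
    by (simp add: edges_spltg[OF G] sum.union_disjoint)
qed

lemma signed_product_cordial_labeling_spltg:
  assumes G: "finite_simple_graph G" and pm: "\<forall>v. \<beta> v \<in> {1, -1}"
    and balanced: "\<bar>\<Sum>e \<in> edges G. edge_label \<beta> e\<bar> \<le> 1"
  shows "signed_product_cordial_labeling (spltg G) (spltg_labeling \<beta>)"
proof -
  have "\<forall>v. spltg_labeling \<beta> v \<in> {1, -1}"
    using pm by (auto simp: spltg_labeling_def)
  then show ?thesis
    using balanced finite_simple_graph_finite(1)[OF G]
    by (simp add: signed_product_cordial_labeling_iff_sums finite_simple_graph_spltg[OF G]
        sum_verts_spltg_labeling sum_edges_spltg_labeling[OF G])
qed

lemma edges_star: "edges (star n) = (\<lambda>i. {0, i}) ` {1..n}"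
  by (auto simp: star_def edges_def)

lemma finite_simple_graph_star: "finite_simple_graph (star n)"
  unfolding finite_simple_graph_def edges_star by (auto simp: star_def verts_def)

lemma sum_alternating_signs: "(\<Sum>i = 1..n. (-1::int) ^ i) = (if even n then 0 else -1)"
  by (induction n) simp_all

lemma sum_edges_star_alternating:
  "(\<Sum>e \<in> edges (star n). edge_label (\<lambda>i. (-1::int) ^ i) e) = (\<Sum>i = 1..n. (-1) ^ i)"
proof -
  have "inj_on (\<lambda>i. {0::nat, i}) {1..n}"
    by (rule inj_onI) (auto simp: doubleton_eq_iff)
  then show ?thesis
    by (simp add: edges_star sum.reindex edge_label_doubleton)
qed

theorem theorem2p1:
  fixes n :: nat
  assumes "n \<ge> 1"
  shows "signed_product_cordial (spltg (star n))"
proof -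
  have "\<bar>\<Sum>e \<in> edges (star n). edge_label (\<lambda>i. (-1::int) ^ i) e\<bar> \<le> 1"
    using sum_edges_star_alternating[of n] sum_alternating_signs[of n] by simp
  then have "signed_product_cordial_labeling (spltg (star n)) (spltg_labeling (\<lambda>i. (-1) ^ i))"
    by (intro signed_product_cordial_labeling_spltg finite_simple_graph_star)
      (simp_all add: minus_one_power_iff)
  then show ?thesis
    unfolding signed_product_cordial_def by blast
qed

end
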